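(* Let $p$ be a positive stochastic choice function on a finite set $X$ such that (a) there exist $a,b,c\in X$ with $a\not\simeq_p b$, $b\not\simeq_p c$, $a\not\simeq_p c$, and (b) for every $x\in X$ there exist $y,z\in X$ with $x\bowtie_p y$, $y\bowtie_p z$ and $x\bowtie_p z$. If $p$ satisfies Generalized Independence of Symmetric Alternatives and Consistency of Revealed Similarities, then $p$ is a 3-step Nested Stochastic Choice.
   Context: $\mathscr{A}$ is the collection of nonempty subsets of $X$; $p(x,A)=0$ for $x\notin A$, $\sum_{a\in A}p(a,A)=1$, $p(a,A)>0$ for $a\in A$; $A\cup x=A\cup\{x\}$. $a\sim_p b$ means $\frac{p(a,A)}{p(b,A)}=\frac{p(a,\{a,b\})}{p(b,\{a,b\})}$ for all $A\ni a,b$. Approximate revealed similarity: $a\bowtie_p b$ iff $a\not\sim_p b$ and $\frac{p(a,A)}{p(b,A)}=\frac{p(a,A\cup x)}{p(b,A\cup x)}$ for every $A\in\mathscr{A}$ (containing $a,b$) and every $x\notin A$ with $x\not\sim_p a$ and $x\not\sim_p b$. Write $a\simeq_p b$ iff $a\sim_p b$ or $a\bowtie_p b$. Generalized Independence of Symmetric Alternatives: for any $A\in\mathscr{A}$, $a,b\in A$, $x\notin A$, if ($a\sim_p x$ and $b\sim_p x$) or ($a\bowtie_p x$ and $b\bowtie_p x$) or ($a\not\simeq_p x$ and $b\not\simeq_p x$), then $\frac{p(a,A)}{p(b,A)}=\frac{p(a,A\cup x)}{p(b,A\cup x)}$. Consistency of Revealed Similarities: for any $x,y,x'\in X$ with $x\sim_p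 x'$: $x\bowtie_p y$ iff $x'\bowtie_p y$. 3-step NSC: there exist a partition $X_1,\dots,X_K$ of $X$, for each $k$ a partition $X_k^1,\dots,X_k^{q_k}$ of $X_k$, and functions $u:X\to\mathbb{R}_{++}$, $w:\bigcup_{i}2^{X_i}\to\mathbb{R}_+$, $v:\bigcup_k\bigcup_l 2^{X_k^l}\to\mathbb{R}_+$ with $w(\emptyset)=v(\emptyset)=0$, such that for every $A\in\mathscr{A}$ and $x\in A\cap X_k^j$, $p(x,A)=\frac{u(x)}{\sum_{y\in A\cap X_k^j}u(y)}\cdot\frac{v(A\cap X_k^j)}{\sum_{l=1}^{q_k}v(A\cap X_k^l)}\cdot\frac{w(A\cap X_k)}{\sum_{i=1}^K w(A\cap X_i)}$. *)

theory Defs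
  imports Complex_Main "HOL-Library.Disjoint_Sets"
begin

text \<open>A stochastic choice function on the finite ground set X; menus are the nonempty
subsets of X. Values of p outside of menus are irrelevant.\<close>

definition positive_scf :: "'a set \<Rightarrow> ('a \<Rightarrow> 'a set \<Rightarrow> real) \<Rightarrow> bool" where
  "positive_scf X p \<longleftrightarrow>
     (\<forall>A. A \<subseteq> X \<and> A \<noteq> {} \<longrightarrow>
        (\<forall>x. x \<notin> A \<longrightarrow> p x A = 0) \<and>
        (\<Sum>a\<in>A. p a A) = 1 \<and>
        (\<forall>a\<in>A. p a A > 0))"

definition rsim :: "'a set \<Rightarrow> ('a \<Rightarrow> 'a set \<Rightarrow> real) \<Rightarrow> 'a \<Rightarrow> 'a \<Rightarrow> bool" where
  "rsim X p a b \<longleftrightarrow>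
     (\<forall>A. A \<subseteq> X \<and> a \<in> A \<and> b \<in> A \<longrightarrow> p a A / p b A = p a {a, b} / p b {a, b})"

definition rbowtie :: "'a set \<Rightarrow> ('a \<Rightarrow> 'a set \<Rightarrow> real) \<Rightarrow> 'a \<Rightarrow> 'a \<Rightarrow> bool" where
  "rbowtie X p a b \<longleftrightarrow> \<not> rsim X p a b \<and>
     (\<forall>A x. A \<subseteq> X \<and> a \<in> A \<and> b \<in> A \<and> x \<in> X \<and> x \<notin> A \<and>
        \<not> rsim X p x a \<and> \<not> rsim X p x b \<longrightarrow>
        p a A / p b A = p a (insert x A) / p b (insert x A))"

definition rsimeq :: "'a set \<Rightarrow> ('a \<Rightarrow> 'a set \<Rightarrow> real) \<Rightarrow> 'a \<Rightarrow> 'a \<Rightarrow> bool" where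
  "rsimeq X p a b \<longleftrightarrow> rsim X p a b \<or> rbowtie X p a b"

definition GISA :: "'a set \<Rightarrow> ('a \<Rightarrow> 'a set \<Rightarrow> real) \<Rightarrow> bool" where
  "GISA X p \<longleftrightarrow>
     (\<forall>A a b x. A \<subseteq> X \<and> A \<noteq> {} \<and> a \<in> A \<and> b \<in> A \<and> x \<in> X \<and> x \<notin> A \<and>
        ((rsim X p a x \<and> rsim X p b x) \<or> (rbowtie X p a x \<and> rbowtie X p b x) \<or>
         (\<not> rsimeq X p a x \<and> \<not> rsimeq X p b x)) \<longrightarrow>
        p a A / p b A = p a (insert x A) / p b (insert x A))"

definition CRS :: "'a set \<Rightarrow> ('a \<Rightarrow> 'a set \<Rightarrow> real) \<Rightarrow> bool" where
  "CRS X p \<longleftrightarrow>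
     (\<forall>x\<in>X. \<forall>y\<in>X. \<forall>x'\<in>X. rsim X p x x' \<longrightarrow> (rbowtie X p x y \<longleftrightarrow> rbowtie X p x' y))"

text \<open>3-step nested stochastic choice. The partition X_1..X_K is a set of blocks P,
and for each block B the partition X_k^1..X_k^{q_k} is the set of blocks Q B.\<close>
definition NSC3 :: "'a set \<Rightarrow> ('a \<Rightarrow> 'a set \<Rightarrow> real) \<Rightarrow> bool" where
  "NSC3 X p \<longleftrightarrow>
     (\<exists>(P :: 'a set set) (Q :: 'a set \<Rightarrow> 'a set set) (u :: 'a \<Rightarrow> real)
        (w :: 'a set \<Rightarrow> real) (v :: 'a set \<Rightarrow> real).
        partition_on X P \<and>
        (\<forall>B\<in>P. partition_on B (Q B)) \<and>
        (\<forall>x\<in>X. u x > 0) \<and>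
        (\<forall>B\<in>P. \<forall>S. S \<subseteq> B \<longrightarrow> w S \<ge> 0) \<and> w {} = 0 \<and>
        (\<forall>B\<in>P. \<forall>C\<in>Q B. \<forall>S. S \<subseteq> C \<longrightarrow> v S \<ge> 0) \<and> v {} = 0 \<and>
        (\<forall>A. A \<subseteq> X \<and> A \<noteq> {} \<longrightarrow>
          (\<forall>B\<in>P. \<forall>C\<in>Q B. \<forall>x\<in>A \<inter> C.
             p x A = u x / (\<Sum>y\<in>A \<inter> C. u y)
                   * (v (A \<inter> C) / (\<Sum>C'\<in>Q B. v (A \<inter> C')))
                   * (w (A \<inter> B) / (\<Sum>B'\<in>P. w (A \<inter> B'))))))"

end

theory Submission
  imports Defs
begin

text \<open>GISA and CRS make revealed similarity \<open>\<sim>\<close> and its extension \<open>\<simeq>\<close> equivalence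
  relations; their classes are the nests and the blocks. An alternative that is \<open>\<bowtie>\<close>-related,
  or not \<open>\<simeq>\<close>-related, to both members of a pair leaves their odds unchanged, so a menu
  chooses within one of its blocks, and within a nest of that block, exactly as the smaller menu
  would, scaled by the total probability of that block or nest. Inside a nest \<open>\<sim>\<close> gives
  Luce weights directly. Between blocks (and between nests of a block) the odds of disjoint sets
  from distinct classes compose multiplicatively only across three distinct classes; with at least
  three classes, which is what hypotheses (a) and (b) provide, they still integrate to
  weights w and v.\<close>

lemma luce_from_proportional:
  fixes q h :: "'i \<Rightarrow> real"
  assumes "finite I" "i \<in> I" "h i > 0" "\<And>j. j \<in> I \<Longrightarrow> q j * h i = q i * h j" "sum q I = 1"
  shows "q i = h i / sum h I"
proof -
  have "sum h I * q i = (\<Sum>j\<in>I. q j * h i)"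
    unfolding sum_distrib_right using assms(4) by (intro sum.cong) (simp_all add: mult.commute)
  also have "\<dots> = h i"
    using assms(5) by (simp add: sum_distrib_right[symmetric])
  finally have "sum h I * q i = h i" .
  moreover from this assms(3) have "sum h I \<noteq> 0"
    by auto
  ultimately show ?thesis
    by (simp add: field_simps)
qed

lemma Image_subset_class:
  assumes "equiv A r" "C \<in> A // r" "S \<subseteq> C" "S \<noteq> {}"
  shows "r `` S = C"
proof -
  obtain c where c: "C = r `` {c}"
    using assms(2) by (rule quotientE)
  have "r `` {s} = C" if "s \<in> S" for s
  proof -
    have "(c, s) \<in> r"
      using that assms(3) c by auto
    from equiv_class_eq[OF assms(1) this] c show ?thesis
      by simp
  qed
  then have "r `` S = (\<Union>s\<in>S. C)"
    by (subst Image_eq_UN) simp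
  with assms(4) show ?thesis
    by simp
qed

lemma partition_on_quotient_refinement:
  assumes "equiv A r" "equiv A s" "r \<subseteq> s" "B \<in> A // s"
  shows "partition_on B (B // r)"
proof (rule partition_onI)
  have B: "B \<subseteq> A"
    using assms in_quotient_imp_subset by blast
  have class_sub: "r `` {y} \<subseteq> B" if "y \<in> B" for y
    using assms that by (auto elim!: quotientE simp: equiv_class_eq_iff)
  have self_mem: "y \<in> r `` {y}" if "y \<in> B" for y
    using assms(1) B that by (meson equiv_class_self subsetD)
  show "\<Union> (B // r) = B"
    using class_sub self_mem by (auto simp: quotient_def)
  show "{} \<notin> B // r"
    using self_mem by (auto simp: quotient_def)
  show "disjnt C C'" if "C \<in> B // r" "C' \<in> B // r" "C \<noteq> C'" for C C'
  proof -
    have "C \<in> A // r" "C' \<in> A // r"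
      using that B by (auto simp: quotient_def)
    then show ?thesis
      using quotient_disj[OF assms(1)] that by (auto simp: disjnt_def)
  qed
qed

lemma equiv_class_neq:
  assumes "equiv A r" "a \<in> A" "b \<in> A" "(a, b) \<notin> r"
  shows "r `` {a} \<noteq> r `` {b}"
  using eq_equiv_class_iff[OF assms(1-3)] assms(4) by blast

definition at_least_three :: "'b set \<Rightarrow> bool" where
  "at_least_three P \<longleftrightarrow> (\<exists>C1\<in>P. \<exists>C2\<in>P. \<exists>C3\<in>P. C1 \<noteq> C2 \<and> C2 \<noteq> C3 \<and> C1 \<noteq> C3)"

lemma at_least_threeI:
  "x \<in> P \<Longrightarrow> y \<in> P \<Longrightarrow> z \<in> P \<Longrightarrow> x \<noteq> y \<Longrightarrow> y \<noteq> z \<Longrightarrow> x \<noteq> z \<Longrightarrow> at_least_three P"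
  unfolding at_least_three_def by blast

definition reference_pair :: "'b set \<Rightarrow> 'b \<times> 'b" where
  "reference_pair P = (SOME (r1, r2). r1 \<in> P \<and> r2 \<in> P \<and> r1 \<noteq> r2 \<and> (\<exists>r3\<in>P. r3 \<noteq> r1 \<and> r3 \<noteq> r2))"

lemma reference_pair:
  assumes "at_least_three P"
  obtains r1 r2 r3 where "reference_pair P = (r1, r2)" "r1 \<in> P" "r2 \<in> P" "r3 \<in> P"
    "r1 \<noteq> r2" "r2 \<noteq> r3" "r1 \<noteq> r3"
proof -
  have "\<exists>r. (\<lambda>(r1, r2). r1 \<in> P \<and> r2 \<in> P \<and> r1 \<noteq> r2 \<and> (\<exists>r3\<in>P. r3 \<noteq> r1 \<and> r3 \<noteq> r2)) r"
    using assms unfolding at_least_three_def by fastforce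
  from someI_ex[OF this] show ?thesis
    using that unfolding reference_pair_def by (auto split: prod.splits)
qed

text \<open>The cocycle identity is only available across three distinct labels, so a set sharing the
  label of the reference r1 is compared with it through a second reference r2; a third reference
  is needed to show that this is consistent.\<close>

definition potential :: "('b \<Rightarrow> 'c) \<Rightarrow> ('b \<Rightarrow> 'b \<Rightarrow> real) \<Rightarrow> 'b \<Rightarrow> 'b \<Rightarrow> 'b \<Rightarrow> real" where
  "potential g F r1 r2 S = (if g S \<noteq> g r1 then F S r1 else F S r2 * F r2 r1)"

locale labelled_cocycle =
  fixes D :: "'b set" and g :: "'b \<Rightarrow> 'c" and F :: "'b \<Rightarrow> 'b \<Rightarrow> real"
  assumes cocycle: "\<lbrakk>S \<in> D; S' \<in> D; S'' \<in> D; g S \<noteq> g S'; g S' \<noteq> g S''; g S \<noteq> g S''\<rbrakk>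
      \<Longrightarrow> F S S' * F S' S'' = F S S''"
    and cocycle_inverse: "\<lbrakk>S \<in> D; S' \<in> D; g S \<noteq> g S'\<rbrakk> \<Longrightarrow> F S S' * F S' S = 1"
begin

lemma potential_detour:
  assumes r: "r1 \<in> D" "r2 \<in> D" "r3 \<in> D" "g r1 \<noteq> g r2" "g r2 \<noteq> g r3" "g r1 \<noteq> g r3"
    and S: "S \<in> D" "S' \<in> D" "g S = g r1" "g S' \<noteq> g r1"
  shows "F S r2 * F r2 r1 = F S S' * F S' r1"
proof (cases "g S' = g r2")
  case False
  have "F S S' * F S' r2 = F S r2"
    using cocycle[of S S' r2] r S False by simp
  moreover have "F S' r2 * F r2 r1 = F S' r1"
    using cocycle[of S' r2 r1] r S False by simp
  ultimately show ?thesis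
    by (metis mult.assoc)
next
  case True
  have a: "F S r3 * F r3 r2 = F S r2" and b: "F r2 r3 * F r3 r1 = F r2 r1"
    using cocycle[of S r3 r2] cocycle[of r2 r3 r1] r S by simp_all
  have c: "F S r3 * F r3 S' = F S S'" and d: "F r3 S' * F S' r1 = F r3 r1"
    using cocycle[of S r3 S'] cocycle[of r3 S' r1] r S True by simp_all
  have "F S r2 * F r2 r1 = F S r3 * (F r3 r2 * F r2 r3) * F r3 r1"
    by (simp only: a[symmetric] b[symmetric] mult.assoc)
  also have "\<dots> = F S r3 * F r3 r1"
    using cocycle_inverse[of r3 r2] r by simp
  also have "\<dots> = F S S' * F S' r1"
    by (simp only: c[symmetric] d[symmetric] mult.assoc)
  finally show ?thesis .
qed

lemma potential_ratio:
  assumes r: "r1 \<in> D" "r2 \<in> D" "r3 \<in> D" "g r1 \<noteq> g r2" "g r2 \<noteq> g r3" "g r1 \<noteq> g r3"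
    and S: "S \<in> D" "S' \<in> D" "g S \<noteq> g S'"
  shows "potential g F r1 r2 S = F S S' * potential g F r1 r2 S'"
proof -
  consider "g S \<noteq> g r1" "g S' \<noteq> g r1" | "g S = g r1" | "g S' = g r1"
    by blast
  then show ?thesis
  proof cases
    case 1
    then show ?thesis
      using cocycle[of S S' r1] r S by (simp add: potential_def)
  next
    case 2
    then show ?thesis
      using potential_detour[OF r S(1,2)] S(3) by (simp add: potential_def)
  next
    case 3
    then have "potential g F r1 r2 S' = F S' S * F S r1"
      using potential_detour[OF r S(2,1)] S(3) by (simp add: potential_def)
    moreover have "F S S' * F S' S = 1"
      using cocycle_inverse S by blast
    ultimately show ?thesis
      using 3 S(3) by (simp add: potential_def mult.assoc[symmetric])
  qed
qed

end

locale gisa_crs =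
  fixes X :: "'a set" and p :: "'a \<Rightarrow> 'a set \<Rightarrow> real"
  assumes finite_X: "finite X" and positive: "positive_scf X p"
    and gisa: "GISA X p" and crs: "CRS X p"
begin

abbreviation "sim \<equiv> rsim X p"
abbreviation "bowtie \<equiv> rbowtie X p"
abbreviation "simeq \<equiv> rsimeq X p"

lemma p_pos: "A \<subseteq> X \<Longrightarrow> a \<in> A \<Longrightarrow> p a A > 0"
  using positive unfolding positive_scf_def by blast

lemma sum_p: "A \<subseteq> X \<Longrightarrow> A \<noteq> {} \<Longrightarrow> (\<Sum>a\<in>A. p a A) = 1"
  using positive unfolding positive_scf_def by blast

lemma ratio_chain: "A \<subseteq> X \<Longrightarrow> b \<in> A \<Longrightarrow> p a A / p c A = (p a A / p b A) * (p b A / p c A)"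
  using p_pos[of A b] by simp

definition iia_rel :: "('a \<Rightarrow> 'a \<Rightarrow> bool) \<Rightarrow> bool" where
  "iia_rel R \<longleftrightarrow> (\<forall>A a b x. A \<subseteq> X \<and> a \<in> A \<and> b \<in> A \<and> x \<in> X \<and> x \<notin> A \<and> R a x \<and> R b x \<longrightarrow>
     p a A / p b A = p a (insert x A) / p b (insert x A))"

lemma iia_relD:
  "\<lbrakk>iia_rel R; A \<subseteq> X; a \<in> A; b \<in> A; x \<in> X; x \<notin> A; R a x; R b x\<rbrakk>
    \<Longrightarrow> p a A / p b A = p a (insert x A) / p b (insert x A)"
  unfolding iia_rel_def by blast

lemma iia_rel_sim: "iia_rel sim"
  and iia_rel_bowtie: "iia_rel bowtie"
  and iia_rel_not_simeq: "iia_rel (\<lambda>a x. \<not> simeq a x)"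
  using gisa unfolding GISA_def iia_rel_def by blast+

subsection \<open>The revealed similarity relations are equivalences\<close>

lemma sim_refl: "a \<in> X \<Longrightarrow> sim a a"
  unfolding rsim_def using p_pos[of "{a}" a] by (auto dest: p_pos)

lemma sim_sym:
  assumes "sim a b"
  shows "sim b a"
  unfolding rsim_def
proof (intro allI impI)
  fix A
  assume "A \<subseteq> X \<and> b \<in> A \<and> a \<in> A"
  with assms have "p a A / p b A = p a {a, b} / p b {a, b}"
    unfolding rsim_def by blast
  then show "p b A / p a A = p b {b, a} / p a {b, a}"
    by (metis inverse_divide insert_commute)
qed

lemma bowtie_sym:
  assumes "bowtie a b"
  shows "bowtie b a"
  unfolding rbowtie_def
proof (intro conjI allI impI)
  show "\<not> sim b a"
    using assms sim_sym unfolding rbowtie_def by blast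
  fix A x
  assume "A \<subseteq> X \<and> b \<in> A \<and> a \<in> A \<and> x \<in> X \<and> x \<notin> A \<and> \<not> sim x b \<and> \<not> sim x a"
  with assms have "p a A / p b A = p a (insert x A) / p b (insert x A)"
    unfolding rbowtie_def by blast
  then show "p b A / p a A = p b (insert x A) / p a (insert x A)"
    by (metis inverse_divide)
qed

lemma sim_trans:
  assumes ab: "sim a b" and bc: "sim b c" and b: "b \<in> X"
  shows "sim a c"
proof -
  let ?through_b = "(p a {a, b} / p b {a, b}) * (p b {b, c} / p c {b, c})"
  have through_b: "p a A / p c A = ?through_b" if A: "A \<subseteq> X" "a \<in> A" "c \<in> A" for A
  proof -
    have ratio_b: "p a A' / p c A' = ?through_b" if "A' \<subseteq> X" "a \<in> A'" "b \<in> A'" "c \<in> A'" for A'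
      using ratio_chain[of A' b a c] that ab bc unfolding rsim_def by simp
    show ?thesis
    proof (cases "b \<in> A")
      case True
      then show ?thesis
        using ratio_b A by blast
    next
      case False
      have "sim a b" "sim c b"
        using ab bc sim_sym by blast+
      then have "p a A / p c A = p a (insert b A) / p c (insert b A)"
        using iia_relD[OF iia_rel_sim] A b False by blast
      also have "\<dots> = ?through_b"
        using ratio_b[of "insert b A"] A b by blast
      finally show ?thesis .
    qed
  qed
  show ?thesis
    unfolding rsim_def
  proof (intro allI impI)
    fix A
    assume A: "A \<subseteq> X \<and> a \<in> A \<and> c \<in> A"
    then have "{a, c} \<subseteq> X"
      by blast
    then show "p a A / p c A = p a {a, c} / p c {a, c}"
      using through_b[of A] through_b[of "{a, c}"] A by simp
  qed
qed

lemma bowtie_sim_trans: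
  assumes "bowtie a b" "sim b c" "a \<in> X" "b \<in> X" "c \<in> X"
  shows "bowtie a c"
  using assms crs bowtie_sym unfolding CRS_def by blast

text \<open>If x is similar to the middle element b, CRS makes it bowtie-related to both ends;
  otherwise each of the two bowtie links absorbs x on its own.\<close>
lemma bowtie_chain_iia:
  assumes ab: "bowtie a b" and bc: "bowtie b c"
    and A: "A \<subseteq> X" "a \<in> A" "b \<in> A" "c \<in> A"
    and x: "x \<in> X" "x \<notin> A" "\<not> sim x a" "\<not> sim x c"
  shows "p a A / p c A = p a (insert x A) / p c (insert x A)"
proof (cases "sim x b")
  case True
  then have "bowtie a x" "bowtie c x"
    using bowtie_sim_trans[OF ab] bowtie_sim_trans[OF bowtie_sym[OF bc]] sim_sym A x by blast+
  then show ?thesis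
    using iia_relD[OF iia_rel_bowtie] A x by blast
next
  case False
  have "p a A / p c A = (p a A / p b A) * (p b A / p c A)"
    using ratio_chain A by blast
  also have "\<dots> = (p a (insert x A) / p b (insert x A)) * (p b (insert x A) / p c (insert x A))"
    using ab bc A x False sim_sym unfolding rbowtie_def by metis
  also have "\<dots> = p a (insert x A) / p c (insert x A)"
    by (rule ratio_chain[symmetric]) (use A x in auto)
  finally show ?thesis .
qed

lemma bowtie_trans:
  assumes ab: "bowtie a b" and bc: "bowtie b c" and ac: "\<not> sim a c" and b: "b \<in> X"
  shows "bowtie a c"
  unfolding rbowtie_def
proof (intro conjI allI impI)
  show "\<not> sim a c"
    by (fact ac)
  fix A x
  assume A: "A \<subseteq> X \<and> a \<in> A \<and> c \<in> A \<and> x \<in> X \<and> x \<notin> A \<and> \<not> sim x a \<and> \<not> sim x c"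
  have ba: "bowtie a b" "bowtie c b"
    using ab bc bowtie_sym by blast+
  show "p a A / p c A = p a (insert x A) / p c (insert x A)"
  proof (cases "b \<in> A")
    case True
    then show ?thesis
      using bowtie_chain_iia[OF ab bc] A by blast
  next
    case False
    show ?thesis
    proof (cases "x = b")
      case True
      then show ?thesis
        using iia_relD[OF iia_rel_bowtie] A ba b by blast
    next
      case x_ne_b: False
      have "p a A / p c A = p a (insert b A) / p c (insert b A)"
        using iia_relD[OF iia_rel_bowtie] A ba b False by blast
      also have "\<dots> = p a (insert x (insert b A)) / p c (insert x (insert b A))"
        using bowtie_chain_iia[OF ab bc, of "insert b A" x] A b x_ne_b by blast
      also have "\<dots> = p a (insert x A) / p c (insert x A)"
        using iia_relD[OF iia_rel_bowtie, of "insert x A" a c b] A ba b False x_ne_b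
        by (simp add: insert_commute)
      finally show ?thesis .
    qed
  qed
qed

lemma simeq_trans:
  assumes ab: "simeq a b" and bc: "simeq b c" and X: "a \<in> X" "b \<in> X" "c \<in> X"
  shows "simeq a c"
proof -
  consider "sim a b" "sim b c" | "sim a b" "bowtie b c" | "bowtie a b" "sim b c" | "bowtie a b" "bowtie b c"
    using ab bc unfolding rsimeq_def by blast
  then show ?thesis
  proof cases
    case 1
    then show ?thesis
      using sim_trans X unfolding rsimeq_def by blast
  next
    case 2
    then have "bowtie c a"
      using bowtie_sim_trans[of c b a] bowtie_sym sim_sym X by blast
    then show ?thesis
      using bowtie_sym unfolding rsimeq_def by blast
  next
    case 3
    then show ?thesis
      using bowtie_sim_trans X unfolding rsimeq_def by blast
  next
    case 4
    then show ?thesis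
      using bowtie_trans X unfolding rsimeq_def by blast
  qed
qed

definition sim_rel :: "'a rel" where
  "sim_rel = {(x, y). x \<in> X \<and> y \<in> X \<and> sim x y}"

definition simeq_rel :: "'a rel" where
  "simeq_rel = {(x, y). x \<in> X \<and> y \<in> X \<and> simeq x y}"

lemma equiv_sim_rel: "equiv X sim_rel"
  unfolding sim_rel_def
  by (rule equivI) (auto simp: refl_on_def sym_def trans_def intro: sim_refl sim_sym sim_trans)

lemma simeq_refl: "a \<in> X \<Longrightarrow> simeq a a"
  and simeq_sym: "simeq a b \<Longrightarrow> simeq b a"
  unfolding rsimeq_def using sim_refl sim_sym bowtie_sym by blast+

lemma equiv_simeq_rel: "equiv X simeq_rel"
  unfolding simeq_rel_def
  by (rule equivI) (auto simp: refl_on_def sym_def trans_def intro: simeq_refl simeq_sym simeq_trans)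

lemma sim_rel_subset: "sim_rel \<subseteq> simeq_rel"
  unfolding sim_rel_def simeq_rel_def rsimeq_def by blast

lemma partition_blocks: "partition_on X (X // simeq_rel)"
  by (rule partition_on_quotient[OF equiv_simeq_rel])

lemma partition_nests: "B \<in> X // simeq_rel \<Longrightarrow> partition_on B (B // sim_rel)"
  by (rule partition_on_quotient_refinement[OF equiv_sim_rel equiv_simeq_rel sim_rel_subset])

lemma nest_subset_block: "B \<in> X // simeq_rel \<Longrightarrow> C \<in> B // sim_rel \<Longrightarrow> C \<subseteq> B"
  using partition_nests unfolding partition_on_def by blast

lemma block_subset: "B \<in> X // simeq_rel \<Longrightarrow> B \<subseteq> X"
  using in_quotient_imp_subset[OF equiv_simeq_rel] .

lemma nests_subset_quotient: "B \<in> X // simeq_rel \<Longrightarrow> B // sim_rel \<subseteq> X // sim_rel"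
  using block_subset unfolding quotient_def by blast

lemma nest_in_quotient: "B \<in> X // simeq_rel \<Longrightarrow> C \<in> B // sim_rel \<Longrightarrow> C \<in> X // sim_rel"
  using nests_subset_quotient by blast

lemma not_simeq_across_blocks:
  assumes "B \<in> X // simeq_rel" "B' \<in> X // simeq_rel" "B \<noteq> B'" "a \<in> B" "z \<in> B'"
  shows "\<not> simeq a z"
  using quotient_eqI[OF equiv_simeq_rel assms(1,2,4,5)] assms block_subset
  unfolding simeq_rel_def by blast

lemma bowtie_across_nests:
  assumes B: "B \<in> X // simeq_rel" and C: "C \<in> B // sim_rel" "C' \<in> B // sim_rel" "C \<noteq> C'"
    and "a \<in> C" "z \<in> C'"
  shows "bowtie a z"
proof -
  have "a \<in> B" "z \<in> B"
    using nest_subset_block[OF B] C assms by blast+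
  then have "simeq a z"
    using in_quotient_imp_in_rel[OF equiv_simeq_rel B] unfolding simeq_rel_def by blast
  moreover have "\<not> sim a z"
    using quotient_eqI[OF equiv_sim_rel nest_in_quotient[OF B C(1)] nest_in_quotient[OF B C(2)]]
      assms block_subset[OF B] \<open>a \<in> B\<close> \<open>z \<in> B\<close> unfolding sim_rel_def by blast
  ultimately show ?thesis
    unfolding rsimeq_def by blast
qed

lemma not_simeq_outside_block:
  assumes B: "B \<in> X // simeq_rel" and "a \<in> B" "z \<in> X - B"
  shows "\<not> simeq a z"
proof (rule not_simeq_across_blocks[OF B quotientI])
  show "z \<in> simeq_rel `` {z}"
    using equiv_class_self[OF equiv_simeq_rel] assms(3) by blast
qed (use assms equiv_class_self[OF equiv_simeq_rel] in auto)

lemma bowtie_outside_nest: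
  assumes B: "B \<in> X // simeq_rel" and C: "C \<in> B // sim_rel" and "a \<in> C" "z \<in> B - C"
  shows "bowtie a z"
proof (rule bowtie_across_nests[OF B C quotientI])
  show "z \<in> sim_rel `` {z}"
    using equiv_class_self[OF equiv_sim_rel] block_subset[OF B] assms(4) by blast
qed (use assms equiv_class_self[OF equiv_sim_rel] block_subset[OF B] in auto)

subsection \<open>Odds of sets of alternatives\<close>

definition prob_set :: "'a set \<Rightarrow> 'a set \<Rightarrow> real" where
  "prob_set A S = (\<Sum>y\<in>S. p y A)"

lemma prob_set_pos:
  assumes "S \<noteq> {}" "S \<subseteq> A" "A \<subseteq> X"
  shows "prob_set A S > 0"
proof -
  have "S \<subseteq> X"
    using assms by blast
  with assms show ?thesis
    unfolding prob_set_def by (intro sum_pos finite_subset[OF _ finite_X]) (auto intro: p_pos)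
qed

lemma ratio_union_iia:
  assumes R: "iia_rel R" and "finite D" "T \<union> D \<subseteq> X" "T \<inter> D = {}"
    and "\<And>a z. a \<in> T \<Longrightarrow> z \<in> D \<Longrightarrow> R a z" and ab: "a \<in> T" "b \<in> T"
  shows "p a (T \<union> D) / p b (T \<union> D) = p a T / p b T"
  using assms(2-5)
proof (induction D rule: finite_induct)
  case empty
  then show ?case
    by simp
next
  case (insert x D)
  then have "p a (T \<union> D) / p b (T \<union> D) = p a (insert x (T \<union> D)) / p b (insert x (T \<union> D))"
    using iia_relD[OF R, of "T \<union> D" a b x] ab by blast
  with insert show ?case
    by simp
qed

lemma p_factor:
  assumes R: "iia_rel R" and T: "T \<subseteq> A" "A \<subseteq> X" "T \<noteq> {}"
    and sep: "\<And>a z. a \<in> T \<Longrightarrow> z \<in> A - T \<Longrightarrow> R a z" and a: "a \<in> T"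
  shows "p a A = prob_set A T * p a T"
proof -
  obtain b where b: "b \<in> T"
    using T by blast
  have "finite (A - T)"
    using T by (meson Diff_subset finite_X finite_subset subset_trans)
  moreover have "T \<union> (A - T) = A"
    using T by blast
  ultimately have ratio: "p y A / p b A = p y T / p b T" if "y \<in> T" for y
    using ratio_union_iia[OF R, of "A - T" T y b] T sep that b by auto
  define k where "k = p b A / p b T"
  have pos: "p b A > 0" "p b T > 0"
    using p_pos T b by auto
  have scale: "p y A = p y T * k" if "y \<in> T" for y
    using ratio[OF that] pos unfolding k_def by (simp add: field_simps)
  have "prob_set A T = (\<Sum>y\<in>T. p y T) * k"
    unfolding prob_set_def sum_distrib_right using scale by simp
  also have "\<dots> = k"
    using sum_p T by simp
  finally show ?thesis
    using scale[OF a] by simp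
qed

lemma prob_set_factor:
  assumes "iia_rel R" "T \<subseteq> A" "A \<subseteq> X" "T \<noteq> {}"
    "\<And>a z. a \<in> T \<Longrightarrow> z \<in> A - T \<Longrightarrow> R a z" "S \<subseteq> T"
  shows "prob_set A S = prob_set A T * prob_set T S"
proof -
  have "prob_set A S = (\<Sum>y\<in>S. prob_set A T * p y T)"
    unfolding prob_set_def[of A S] using p_factor[OF assms(1-5)] assms(6) by (intro sum.cong) auto
  then show ?thesis
    by (simp add: prob_set_def[of T S] sum_distrib_left)
qed

definition odds :: "'a set \<Rightarrow> 'a set \<Rightarrow> real" where
  "odds S S' = prob_set (S \<union> S') S / prob_set (S \<union> S') S'"

lemma odds_pos: "S \<noteq> {} \<Longrightarrow> S' \<noteq> {} \<Longrightarrow> S \<union> S' \<subseteq> X \<Longrightarrow> odds S S' > 0"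
  unfolding odds_def by (simp add: prob_set_pos)

lemma odds_empty: "odds {} S = 0"
  unfolding odds_def prob_set_def by simp

lemma odds_eq_prob_set_ratio:
  assumes R: "iia_rel R" and "S \<union> S' \<subseteq> M" "M \<subseteq> X" "S \<noteq> {}" "S' \<noteq> {}"
    and "\<And>a z. a \<in> S \<union> S' \<Longrightarrow> z \<in> M - (S \<union> S') \<Longrightarrow> R a z"
  shows "odds S S' = prob_set M S / prob_set M S'"
proof -
  have ne: "S \<union> S' \<noteq> {}"
    using assms by blast
  have "prob_set M S = prob_set M (S \<union> S') * prob_set (S \<union> S') S"
    by (rule prob_set_factor[OF R assms(2,3) ne]) (use assms(6) in auto)
  moreover have "prob_set M S' = prob_set M (S \<union> S') * prob_set (S \<union> S') S'"
    by (rule prob_set_factor[OF R assms(2,3) ne]) (use assms(6) in auto)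
  moreover have "prob_set M (S \<union> S') > 0"
    using prob_set_pos[OF ne assms(2,3)] .
  ultimately show ?thesis
    unfolding odds_def by simp
qed

lemma labelled_cocycle_odds:
  assumes R: "iia_rel R" and D: "\<And>S. S \<in> D \<Longrightarrow> S \<noteq> {} \<and> S \<subseteq> X"
    and sep: "\<And>S S' a z. S \<in> D \<Longrightarrow> S' \<in> D \<Longrightarrow> g S \<noteq> g S' \<Longrightarrow> a \<in> S \<Longrightarrow> z \<in> S' \<Longrightarrow> R a z"
  shows "labelled_cocycle D g odds"
proof
  fix S1 S2 S3
  assume S: "S1 \<in> D" "S2 \<in> D" "S3 \<in> D" "g S1 \<noteq> g S2" "g S2 \<noteq> g S3" "g S1 \<noteq> g S3"
  let ?M = "S1 \<union> S2 \<union> S3"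
  have M: "?M \<subseteq> X" "S1 \<noteq> {}" "S2 \<noteq> {}" "S3 \<noteq> {}"
    using D S(1-3) by blast+
  have sep3: "R a z" if "a \<in> S1 \<union> S2" "z \<in> S3" for a z
    using that sep[of S1 S3 a z] sep[of S2 S3 a z] S by blast
  have sep1: "R a z" if "a \<in> S2 \<union> S3" "z \<in> S1" for a z
    using that sep[of S2 S1 a z] sep[of S3 S1 a z] S(1-3) not_sym[OF S(4)] not_sym[OF S(6)] by blast
  have sep2: "R a z" if "a \<in> S1 \<union> S3" "z \<in> S2" for a z
    using that sep[of S1 S2 a z] sep[of S3 S2 a z] S(1-4) not_sym[OF S(5)] by blast
  have in_M: "odds S S' = prob_set ?M S / prob_set ?M S'"
    if "S \<union> S' \<subseteq> ?M" "S \<noteq> {}" "S' \<noteq> {}" "\<And>a z. a \<in> S \<union> S' \<Longrightarrow> z \<in> ?M - (S \<union> S') \<Longrightarrow> R a z"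
    for S S'
    using odds_eq_prob_set_ratio[OF R that(1) M(1) that(2-4)] .
  have "odds S1 S2 = prob_set ?M S1 / prob_set ?M S2"
    by (rule in_M) (use M sep3 in blast)+
  moreover have "odds S2 S3 = prob_set ?M S2 / prob_set ?M S3"
    by (rule in_M) (use M sep1 in blast)+
  moreover have "odds S1 S3 = prob_set ?M S1 / prob_set ?M S3"
    by (rule in_M) (use M sep2 in blast)+
  moreover have "prob_set ?M S2 > 0"
    by (rule prob_set_pos) (use M in auto)
  ultimately show "odds S1 S2 * odds S2 S3 = odds S1 S3"
    by simp
next
  fix S1 S2
  assume "S1 \<in> D" "S2 \<in> D" "g S1 \<noteq> g S2"
  then have "prob_set (S1 \<union> S2) S1 > 0" "prob_set (S1 \<union> S2) S2 > 0"
    using prob_set_pos[of _ "S1 \<union> S2"] D by auto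
  then show "odds S1 S2 * odds S2 S1 = 1"
    unfolding odds_def by (simp add: Un_commute)
qed

lemma prob_set_luce:
  assumes R: "iia_rel R" and M: "M \<subseteq> X" and I: "finite I" "i \<in> I" "K i \<noteq> {}"
    and cover: "(\<Union>j\<in>I. K j) = M" and disj: "disjoint_family_on K I"
    and sep: "\<And>j j' a z. j \<in> I \<Longrightarrow> j' \<in> I \<Longrightarrow> j \<noteq> j' \<Longrightarrow> a \<in> K j \<Longrightarrow> z \<in> K j' \<Longrightarrow> R a z"
    and weight: "weight (K i) > 0" "weight {} = 0"
      "\<And>j. j \<in> I \<Longrightarrow> j \<noteq> i \<Longrightarrow> K j \<noteq> {} \<Longrightarrow> weight (K i) = odds (K i) (K j) * weight (K j)"
  shows "prob_set M (K i) = weight (K i) / (\<Sum>j\<in>I. weight (K j))"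
proof -
  have K: "K j \<subseteq> M" if "j \<in> I" for j
    using cover that by blast
  have "(\<Sum>j\<in>I. prob_set M (K j)) = (\<Sum>y\<in>(\<Union>j\<in>I. K j). p y M)"
    unfolding prob_set_def using I(1) K M disj
    by (intro sum.UNION_disjoint[symmetric]) (auto intro: finite_subset[OF _ finite_X] simp: disjoint_family_on_def)
  also have "\<dots> = 1"
    unfolding cover using sum_p[OF M] K[OF I(2)] I(3) by blast
  finally have total: "(\<Sum>j\<in>I. prob_set M (K j)) = 1" .
  have proportional: "prob_set M (K j) * weight (K i) = prob_set M (K i) * weight (K j)" if j: "j \<in> I" for j
  proof -
    consider "j = i" | "K j = {}" | "j \<noteq> i" "K j \<noteq> {}"
      by blast
    then show ?thesis
    proof cases
      case 3
      have "odds (K i) (K j) = prob_set M (K i) / prob_set M (K j)"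
      proof (rule odds_eq_prob_set_ratio[OF R _ M I(3) 3(2)])
        show "K i \<union> K j \<subseteq> M"
          using K I(2) j by blast
        show "R a z" if az: "a \<in> K i \<union> K j" "z \<in> M - (K i \<union> K j)" for a z
        proof -
          obtain l where "l \<in> I" "z \<in> K l"
            using az cover by blast
          with az sep[of i l a z] sep[of j l a z] I(2) j show ?thesis
            by blast
        qed
      qed
      moreover have "prob_set M (K j) > 0"
        using prob_set_pos 3(2) K[OF j] M by blast
      ultimately show ?thesis
        using weight(3)[OF j 3] by (simp add: field_simps)
    qed (simp_all add: prob_set_def weight(2))
  qed
  show ?thesis
    using luce_from_proportional[where q = "\<lambda>j. prob_set M (K j)" and h = "\<lambda>j. weight (K j)"]
      I(1,2) weight(1) proportional total by simp
qed

text \<open>A subset of an r-class is labelled by that class, r `` S.\<close>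

definition level_weight :: "'a rel \<Rightarrow> 'a set set \<Rightarrow> 'a set \<Rightarrow> real" where
  "level_weight r P S = (case reference_pair P of (r1, r2) \<Rightarrow> potential (Image r) odds r1 r2 S)"

lemma level_weight_empty: "level_weight r P {} = 0"
  unfolding level_weight_def potential_def by (simp add: odds_empty split: prod.split)

lemma level_weight_pos:
  assumes r: "equiv X r" "P \<subseteq> X // r" and three: "at_least_three P" and S: "S \<noteq> {}" "S \<subseteq> X"
  shows "level_weight r P S > 0"
proof -
  obtain r1 r2 r3 where refs: "reference_pair P = (r1, r2)" "r1 \<in> P" "r2 \<in> P"
    using reference_pair[OF three] by metis
  then have "r1 \<noteq> {}" "r1 \<subseteq> X" "r2 \<noteq> {}" "r2 \<subseteq> X"
    using r in_quotient_imp_non_empty in_quotient_imp_subset by blast+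
  with S show ?thesis
    unfolding level_weight_def potential_def refs by (simp add: odds_pos)
qed

lemma level_weight_ratio:
  assumes R: "iia_rel R" and r: "equiv X r" "P \<subseteq> X // r" and three: "at_least_three P"
    and sep: "\<And>C C' a z. C \<in> P \<Longrightarrow> C' \<in> P \<Longrightarrow> C \<noteq> C' \<Longrightarrow> a \<in> C \<Longrightarrow> z \<in> C' \<Longrightarrow> R a z"
    and S: "S \<noteq> {}" "S \<subseteq> C" "C \<in> P" and S': "S' \<noteq> {}" "S' \<subseteq> C'" "C' \<in> P" and "C \<noteq> C'"
  shows "level_weight r P S = odds S S' * level_weight r P S'"
proof -
  define D where "D = {T. T \<noteq> {} \<and> (\<exists>C\<in>P. T \<subseteq> C)}"
  have label: "r `` T = C" if "T \<noteq> {}" "T \<subseteq> C" "C \<in> P" for T C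
    using Image_subset_class[OF r(1)] r(2) that by blast
  interpret labelled_cocycle D "Image r" odds
  proof (rule labelled_cocycle_odds[OF R])
    show "T \<noteq> {} \<and> T \<subseteq> X" if "T \<in> D" for T
      using that in_quotient_imp_subset[OF r(1)] r(2) unfolding D_def by blast
    show "R a z" if T: "T \<in> D" "T' \<in> D" "r `` T \<noteq> r `` T'" and "a \<in> T" "z \<in> T'" for T T' a z
    proof -
      obtain C C' where "C \<in> P" "T \<subseteq> C" "C' \<in> P" "T' \<subseteq> C'"
        using T unfolding D_def by blast
      moreover from this have "C \<noteq> C'"
        using T label unfolding D_def by auto
      ultimately show ?thesis
        using sep that by blast
    qed
  qed
  obtain r1 r2 r3 where refs: "reference_pair P = (r1, r2)" "r1 \<in> P" "r2 \<in> P" "r3 \<in> P"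
    "r1 \<noteq> r2" "r2 \<noteq> r3" "r1 \<noteq> r3"
    using reference_pair[OF three] by metis
  have nonempty: "r1 \<noteq> {}" "r2 \<noteq> {}" "r3 \<noteq> {}"
    using refs r in_quotient_imp_non_empty by blast+
  have "r1 \<in> D" "r2 \<in> D" "r3 \<in> D" "S \<in> D" "S' \<in> D"
    using refs nonempty S S' unfolding D_def by blast+
  moreover have "r `` r1 = r1" "r `` r2 = r2" "r `` r3 = r3" "r `` S = C" "r `` S' = C'"
    using label refs nonempty S S' by blast+
  ultimately show ?thesis
    unfolding level_weight_def refs using potential_ratio[of r1 r2 r3 S S'] refs \<open>C \<noteq> C'\<close> by simp
qed

subsection \<open>The three levels of the nested choice\<close>

definition u :: "'a \<Rightarrow> real" where
  "u x = p x (sim_rel `` {x})"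

definition w :: "'a set \<Rightarrow> real" where
  "w = level_weight simeq_rel (X // simeq_rel)"

text \<open>For S inside a nest, simeq_rel `` S is the block containing it.\<close>

definition v :: "'a set \<Rightarrow> real" where
  "v S = level_weight sim_rel ((simeq_rel `` S) // sim_rel) S"

lemma u_pos:
  assumes "x \<in> X"
  shows "u x > 0"
  unfolding u_def
  using p_pos[OF in_quotient_imp_subset[OF equiv_sim_rel quotientI[OF assms]]
      equiv_class_self[OF equiv_sim_rel assms]] .

lemma p_nest_luce:
  assumes T: "T \<subseteq> C" "C \<in> X // sim_rel" and x: "x \<in> T"
  shows "p x T = u x / (\<Sum>y\<in>T. u y)"
proof (rule luce_from_proportional[where q = "\<lambda>y. p y T"])
  have C: "C \<subseteq> X"
    using in_quotient_imp_subset[OF equiv_sim_rel T(2)] .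
  with T(1) have TX: "T \<subseteq> X"
    by blast
  show "finite T"
    using finite_subset[OF TX finite_X] .
  show "x \<in> T" "u x > 0" "(\<Sum>y\<in>T. p y T) = 1"
    using x TX u_pos sum_p[OF TX] by auto
  have nest_eq: "sim_rel `` {y} = C" if "y \<in> T" for y
    using Image_subset_class[OF equiv_sim_rel T(2), of "{y}"] T that by blast
  show "p y T * u x = p x T * u y" if y: "y \<in> T" for y
  proof -
    have "sim y x"
      using in_quotient_imp_in_rel[OF equiv_sim_rel T(2), of y x] T x y unfolding sim_rel_def by blast
    then have "p y T / p x T = p y {y, x} / p x {y, x}" "p y C / p x C = p y {y, x} / p x {y, x}"
      using T C x y unfolding rsim_def by blast+
    moreover have "p x T > 0" "p x C > 0"
      using p_pos T C x by blast+
    ultimately show ?thesis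
      unfolding u_def nest_eq[OF x] nest_eq[OF y] by (simp add: field_simps)
  qed
qed

lemma at_least_three_blocks:
  assumes "\<exists>a\<in>X. \<exists>b\<in>X. \<exists>c\<in>X. \<not> simeq a b \<and> \<not> simeq b c \<and> \<not> simeq a c"
  shows "at_least_three (X // simeq_rel)"
proof -
  obtain a b c where abc: "a \<in> X" "b \<in> X" "c \<in> X" "\<not> simeq a b" "\<not> simeq b c" "\<not> simeq a c"
    using assms by blast
  then have "(a, b) \<notin> simeq_rel" "(b, c) \<notin> simeq_rel" "(a, c) \<notin> simeq_rel"
    unfolding simeq_rel_def by blast+
  with abc(1-3) show ?thesis
    by (intro at_least_threeI[where x = "simeq_rel `` {a}" and y = "simeq_rel `` {b}"
          and z = "simeq_rel `` {c}"] quotientI equiv_class_neq[OF equiv_simeq_rel])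
qed

lemma at_least_three_nests:
  assumes "\<forall>x\<in>X. \<exists>y\<in>X. \<exists>z\<in>X. bowtie x y \<and> bowtie y z \<and> bowtie x z" and B: "B \<in> X // simeq_rel"
  shows "at_least_three (B // sim_rel)"
proof -
  obtain x where x: "x \<in> X" "B = simeq_rel `` {x}"
    using B by (rule quotientE)
  then obtain y z where yz: "y \<in> X" "z \<in> X" "bowtie x y" "bowtie y z" "bowtie x z"
    using assms by blast
  have "x \<in> B" "y \<in> B" "z \<in> B"
    using x yz equiv_class_self[OF equiv_simeq_rel x(1)] unfolding simeq_rel_def rsimeq_def by auto
  moreover have "(x, y) \<notin> sim_rel" "(y, z) \<notin> sim_rel" "(x, z) \<notin> sim_rel"
    using yz unfolding sim_rel_def rbowtie_def by blast+
  ultimately show ?thesis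
    using x(1) yz(1,2)
    by (intro at_least_threeI[where x = "sim_rel `` {x}" and y = "sim_rel `` {y}"
          and z = "sim_rel `` {z}"] quotientI equiv_class_neq[OF equiv_sim_rel])
qed

end

locale nested_gisa_crs = gisa_crs +
  assumes three_blocks: "at_least_three (X // simeq_rel)"
    and three_nests: "B \<in> X // simeq_rel \<Longrightarrow> at_least_three (B // sim_rel)"
begin

lemma w_empty: "w {} = 0"
  unfolding w_def by (rule level_weight_empty)

lemma v_empty: "v {} = 0"
  unfolding v_def by (rule level_weight_empty)

lemma w_pos: "S \<noteq> {} \<Longrightarrow> S \<subseteq> X \<Longrightarrow> w S > 0"
  unfolding w_def by (rule level_weight_pos[OF equiv_simeq_rel subset_refl three_blocks])

lemma w_ratio:
  assumes "B \<in> X // simeq_rel" "B' \<in> X // simeq_rel" "B \<noteq> B'"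
    and "S \<noteq> {}" "S \<subseteq> B" "S' \<noteq> {}" "S' \<subseteq> B'"
  shows "w S = odds S S' * w S'"
  unfolding w_def
  by (rule level_weight_ratio[OF iia_rel_not_simeq equiv_simeq_rel subset_refl three_blocks
        not_simeq_across_blocks assms(4,5,1,6,7,2,3)])

lemma block_of_subset:
  assumes "B \<in> X // simeq_rel" "C \<in> B // sim_rel" "S \<subseteq> C" "S \<noteq> {}"
  shows "simeq_rel `` S = B"
proof (rule Image_subset_class[OF equiv_simeq_rel assms(1) _ assms(4)])
  show "S \<subseteq> B"
    using nest_subset_block[OF assms(1,2)] assms(3) by blast
qed

lemma v_pos:
  assumes "B \<in> X // simeq_rel" "C \<in> B // sim_rel" "S \<subseteq> C" "S \<noteq> {}"
  shows "v S > 0"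
  unfolding v_def block_of_subset[OF assms]
proof (rule level_weight_pos[OF equiv_sim_rel nests_subset_quotient[OF assms(1)] three_nests[OF assms(1)]])
  show "S \<noteq> {}" "S \<subseteq> X"
    using assms nest_subset_block[OF assms(1,2)] block_subset[OF assms(1)] by blast+
qed

lemma v_ratio:
  assumes B: "B \<in> X // simeq_rel" and C: "C \<in> B // sim_rel" "C' \<in> B // sim_rel" "C \<noteq> C'"
    and S: "S \<subseteq> C" "S \<noteq> {}" and S': "S' \<subseteq> C'" "S' \<noteq> {}"
  shows "v S = odds S S' * v S'"
  unfolding v_def block_of_subset[OF B C(1) S] block_of_subset[OF B C(2) S']
  by (rule level_weight_ratio[OF iia_rel_bowtie equiv_sim_rel nests_subset_quotient[OF B]
        three_nests[OF B] bowtie_across_nests[OF B] S(2,1) C(1) S'(2,1) C(2,3)])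

lemma w_nonneg: "S \<subseteq> X \<Longrightarrow> w S \<ge> 0"
  using w_pos w_empty by (cases "S = {}") (auto intro: less_imp_le)

lemma v_nonneg:
  assumes "B \<in> X // simeq_rel" "C \<in> B // sim_rel" "S \<subseteq> C"
  shows "v S \<ge> 0"
  using v_pos[OF assms] v_empty by (cases "S = {}") auto

lemma prob_set_block_luce:
  assumes A: "A \<subseteq> X" and B: "B \<in> X // simeq_rel" and AB: "A \<inter> B \<noteq> {}"
  shows "prob_set A (A \<inter> B) = w (A \<inter> B) / (\<Sum>B'\<in>X // simeq_rel. w (A \<inter> B'))"
proof (rule prob_set_luce[where K = "\<lambda>B'. A \<inter> B'", OF iia_rel_not_simeq A _ B AB])
  show "finite (X // simeq_rel)"
    by (rule finite_quotient[OF finite_X equiv_type[OF equiv_simeq_rel]])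
  have "(\<Union>B'\<in>X // simeq_rel. A \<inter> B') = A \<inter> \<Union>(X // simeq_rel)"
    by blast
  then show "(\<Union>B'\<in>X // simeq_rel. A \<inter> B') = A"
    using Union_quotient[OF equiv_simeq_rel] A by auto
  show "disjoint_family_on (\<lambda>B'. A \<inter> B') (X // simeq_rel)"
    using quotient_disj[OF equiv_simeq_rel] unfolding disjoint_family_on_def by blast
  show "\<not> simeq a z" if "B1 \<in> X // simeq_rel" "B2 \<in> X // simeq_rel" "B1 \<noteq> B2"
    "a \<in> A \<inter> B1" "z \<in> A \<inter> B2" for B1 B2 a z
    using not_simeq_across_blocks[OF that(1-3)] that(4,5) by blast
  show "w (A \<inter> B) > 0"
    using w_pos[of "A \<inter> B"] AB A by blast
  show "w {} = 0"
    by (rule w_empty)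
  show "w (A \<inter> B) = odds (A \<inter> B) (A \<inter> B') * w (A \<inter> B')"
    if "B' \<in> X // simeq_rel" "B' \<noteq> B" "A \<inter> B' \<noteq> {}" for B'
    by (rule w_ratio[OF B that(1)]) (use that AB in auto)
qed

lemma prob_set_nest_luce:
  assumes A: "A \<subseteq> X" and B: "B \<in> X // simeq_rel" and C: "C \<in> B // sim_rel" and AC: "A \<inter> C \<noteq> {}"
  shows "prob_set (A \<inter> B) (A \<inter> C) = v (A \<inter> C) / (\<Sum>C'\<in>B // sim_rel. v (A \<inter> C'))"
proof (rule prob_set_luce[where K = "\<lambda>C'. A \<inter> C'", OF iia_rel_bowtie _ _ C AC])
  show "A \<inter> B \<subseteq> X"
    using A by blast
  show "finite (B // sim_rel)"
    by (rule finite_subset[OF nests_subset_quotient[OF B]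
          finite_quotient[OF finite_X equiv_type[OF equiv_sim_rel]]])
  have "(\<Union>C'\<in>B // sim_rel. A \<inter> C') = A \<inter> \<Union>(B // sim_rel)"
    by blast
  then show "(\<Union>C'\<in>B // sim_rel. A \<inter> C') = A \<inter> B"
    using partition_nests[OF B] unfolding partition_on_def by simp
  show "disjoint_family_on (\<lambda>C'. A \<inter> C') (B // sim_rel)"
    using quotient_disj[OF equiv_sim_rel] nests_subset_quotient[OF B]
    unfolding disjoint_family_on_def by blast
  show "bowtie a z" if "C1 \<in> B // sim_rel" "C2 \<in> B // sim_rel" "C1 \<noteq> C2"
    "a \<in> A \<inter> C1" "z \<in> A \<inter> C2" for C1 C2 a z
    using bowtie_across_nests[OF B that(1-3)] that(4,5) by blast
  show "v (A \<inter> C) > 0"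
    by (rule v_pos[OF B C _ AC]) blast
  show "v {} = 0"
    by (rule v_empty)
  show "v (A \<inter> C) = odds (A \<inter> C) (A \<inter> C') * v (A \<inter> C')"
    if "C' \<in> B // sim_rel" "C' \<noteq> C" "A \<inter> C' \<noteq> {}" for C'
    by (rule v_ratio[OF B C that(1)]) (use that AC in auto)
qed

lemma nested_factorization:
  assumes A: "A \<subseteq> X" and B: "B \<in> X // simeq_rel" and C: "C \<in> B // sim_rel" and x: "x \<in> A \<inter> C"
  shows "p x A = u x / (\<Sum>y\<in>A \<inter> C. u y)
    * (v (A \<inter> C) / (\<Sum>C'\<in>B // sim_rel. v (A \<inter> C')))
    * (w (A \<inter> B) / (\<Sum>B'\<in>X // simeq_rel. w (A \<inter> B')))"
proof -
  have CB: "C \<subseteq> B"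
    using nest_subset_block[OF B C] .
  have nonempty: "A \<inter> B \<noteq> {}" "A \<inter> C \<noteq> {}"
    using x CB by blast+
  have "p x A = prob_set A (A \<inter> B) * p x (A \<inter> B)"
  proof (rule p_factor[OF iia_rel_not_simeq _ A])
    show "\<not> simeq a z" if "a \<in> A \<inter> B" "z \<in> A - A \<inter> B" for a z
      using not_simeq_outside_block[OF B] that A by blast
  qed (use x CB in auto)
  also have "p x (A \<inter> B) = prob_set (A \<inter> B) (A \<inter> C) * p x (A \<inter> C)"
  proof (rule p_factor[OF iia_rel_bowtie])
    show "bowtie a z" if "a \<in> A \<inter> C" "z \<in> A \<inter> B - A \<inter> C" for a z
      using bowtie_outside_nest[OF B C] that by blast
  qed (use A x CB in auto)
  also have "p x (A \<inter> C) = u x / (\<Sum>y\<in>A \<inter> C. u y)"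
    by (rule p_nest_luce[OF _ nest_in_quotient[OF B C] x]) blast
  finally show ?thesis
    unfolding prob_set_block_luce[OF A B nonempty(1)] prob_set_nest_luce[OF A B C nonempty(2)]
    by (simp only: ac_simps)
qed

end

theorem theorem6:
  fixes X :: "'a set" and p :: "'a \<Rightarrow> 'a set \<Rightarrow> real"
  assumes "finite X"
    and "positive_scf X p"
    and "\<exists>a\<in>X. \<exists>b\<in>X. \<exists>c\<in>X. \<not> rsimeq X p a b \<and> \<not> rsimeq X p b c \<and> \<not> rsimeq X p a c"
    and "\<forall>x\<in>X. \<exists>y\<in>X. \<exists>z\<in>X. rbowtie X p x y \<and> rbowtie X p y z \<and> rbowtie X p x z"
    and "GISA X p"
    and "CRS X p"
  shows "NSC3 X p"
proof -
  interpret gisa_crs X p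
    using assms by unfold_locales
  interpret nested_gisa_crs X p
    using at_least_three_blocks[OF assms(3)] at_least_three_nests[OF assms(4)] by unfold_locales
  show ?thesis
    unfolding NSC3_def
  proof (rule exI[of _ "X // simeq_rel"], rule exI[of _ "\<lambda>B. B // sim_rel"], rule exI[of _ u],
      rule exI[of _ w], rule exI[of _ v], intro conjI ballI allI impI)
    show "0 \<le> w S" if "B \<in> X // simeq_rel" "S \<subseteq> B" for B S
      using w_nonneg block_subset that by blast
  qed (auto simp: partition_blocks partition_nests u_pos v_nonneg w_empty v_empty nested_factorization)
qed

end
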